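(* Let $T$ be a locally finite, infinite tree with root $o$ such that every vertex has forward degree at least $2$. Let $d$ be an ultrametric on $\partial T$ whose closed balls (of positive radius) are exactly the sets $\partial T_x$, $x \in T$. Then there is an ultrametric element $\phi$ on $T$ such that $d = d_{\phi}$.
   Context: $T$ is identified with its vertex set. For $x \neq o$, $x^-$ denotes the neighbour of $x$ on the geodesic from $o$ to $x$; the forward degree of $x$ is $\deg^+(x) = |\{y \in T : y^- = x\}|$. A ray is a one-sided infinite path of distinct successive neighbours; two rays are equivalent if their symmetric difference is finite; an end is an equivalence class of rays, and $\partial T$ is the set of ends. For $\xi\in\partial T$, $\pi(o,\xi)$ is the unique ray from $o$ representing $\xi$. For $x \in T$, $T_x = \{y \in T : x \text{ lies on the geodesic from } o \text{ to } y\}$ and $\partial T_x$ is the set of ends having a representative ray inside $T_x$. For distinct $\xi,\eta \in \partial T$, the confluent $\xi \wedge \eta$ is the last common vertex of the rays $\pi(o,\xi)$ and $\pi(o,\eta)$. An ultrametric element is a function $\phi : T \to (0,\infty)$ with (i) $\phi(x^-) > \phi(x)$ for every $x \neq o$ and (ii) $\phi(x_n) \to 0$ along every geodesic ray $[x_0,x_1,x_2,\dots]$. It induces the ultrametric $d_\phi$ on $\partial T$ given by $d_\phi(\xi,\xi)=0$ and $d_\phi(\xi,\eta) = \phi(\xi\wedge\eta)$ for $\xi \neq \eta$. *)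

theory Defs
  imports "HOL-Analysis.Analysis"
begin

text \<open>A rooted tree is given by a vertex set V, a root r and the parent map p
(p x is the vertex x^- for x \<noteq> r).  Every vertex reaches the root by finitely many parent steps,
which makes the graph a tree rooted at r.\<close>

definition rooted_tree :: "'v set \<Rightarrow> 'v \<Rightarrow> ('v \<Rightarrow> 'v) \<Rightarrow> bool" where
  "rooted_tree V r p \<longleftrightarrow> r \<in> V \<and> (\<forall>x\<in>V. x \<noteq> r \<longrightarrow> p x \<in> V)
     \<and> (\<forall>x\<in>V. \<exists>n. (p ^^ n) x = r)"

definition adj :: "'v set \<Rightarrow> 'v \<Rightarrow> ('v \<Rightarrow> 'v) \<Rightarrow> 'v \<Rightarrow> 'v \<Rightarrow> bool" where
  "adj V r p x y \<longleftrightarrow> x \<in> V \<and> y \<in> V \<and> ((x \<noteq> r \<and> p x = y) \<or> (y \<noteq> r \<and> p y = x))"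

definition children :: "'v set \<Rightarrow> 'v \<Rightarrow> ('v \<Rightarrow> 'v) \<Rightarrow> 'v \<Rightarrow> 'v set" where
  "children V r p x = {y \<in> V. y \<noteq> r \<and> p y = x}"

definition locally_finite :: "'v set \<Rightarrow> 'v \<Rightarrow> ('v \<Rightarrow> 'v) \<Rightarrow> bool" where
  "locally_finite V r p \<longleftrightarrow> (\<forall>x\<in>V. finite {y. adj V r p x y})"

definition fdeg :: "'v set \<Rightarrow> 'v \<Rightarrow> ('v \<Rightarrow> 'v) \<Rightarrow> 'v \<Rightarrow> nat" where
  "fdeg V r p x = card (children V r p x)"

definition ray :: "'v set \<Rightarrow> 'v \<Rightarrow> ('v \<Rightarrow> 'v) \<Rightarrow> (nat \<Rightarrow> 'v) \<Rightarrow> bool" where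
  "ray V r p f \<longleftrightarrow> inj f \<and> (\<forall>n. adj V r p (f n) (f (Suc n)))"

definition ray_equiv :: "(nat \<Rightarrow> 'v) \<Rightarrow> (nat \<Rightarrow> 'v) \<Rightarrow> bool" where
  "ray_equiv f g \<longleftrightarrow> finite ((range f - range g) \<union> (range g - range f))"

definition ends :: "'v set \<Rightarrow> 'v \<Rightarrow> ('v \<Rightarrow> 'v) \<Rightarrow> (nat \<Rightarrow> 'v) set set" where
  "ends V r p = {{g. ray V r p g \<and> ray_equiv f g} | f. ray V r p f}"

definition subtree :: "'v set \<Rightarrow> 'v \<Rightarrow> ('v \<Rightarrow> 'v) \<Rightarrow> 'v \<Rightarrow> 'v set" where
  "subtree V r p x = {y \<in> V. \<exists>n. (p ^^ n) y = x \<and> (\<forall>k<n. (p ^^ k) y \<noteq> r)}"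

definition boundary_sub :: "'v set \<Rightarrow> 'v \<Rightarrow> ('v \<Rightarrow> 'v) \<Rightarrow> 'v \<Rightarrow> (nat \<Rightarrow> 'v) set set" where
  "boundary_sub V r p x = {\<xi> \<in> ends V r p. \<exists>f\<in>\<xi>. range f \<subseteq> subtree V r p x}"

definition ray_from_root :: "'v \<Rightarrow> (nat \<Rightarrow> 'v) set \<Rightarrow> (nat \<Rightarrow> 'v)" where
  "ray_from_root r \<xi> = (THE f. f \<in> \<xi> \<and> f 0 = r)"

definition confluent :: "'v \<Rightarrow> (nat \<Rightarrow> 'v) set \<Rightarrow> (nat \<Rightarrow> 'v) set \<Rightarrow> 'v" where
  "confluent r \<xi> \<eta> = (let f = ray_from_root r \<xi>; g = ray_from_root r \<eta>
                       in f (GREATEST n. f n \<in> range g))"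

definition ultrametric_element :: "'v set \<Rightarrow> 'v \<Rightarrow> ('v \<Rightarrow> 'v) \<Rightarrow> ('v \<Rightarrow> real) \<Rightarrow> bool" where
  "ultrametric_element V r p \<phi> \<longleftrightarrow> (\<forall>x\<in>V. \<phi> x > 0)
     \<and> (\<forall>x\<in>V. x \<noteq> r \<longrightarrow> \<phi> (p x) > \<phi> x)
     \<and> (\<forall>f. ray V r p f \<longrightarrow> (\<lambda>n. \<phi> (f n)) \<longlonglongrightarrow> 0)"

definition d_phi :: "'v \<Rightarrow> ('v \<Rightarrow> real) \<Rightarrow> (nat \<Rightarrow> 'v) set \<Rightarrow> (nat \<Rightarrow> 'v) set \<Rightarrow> real" where
  "d_phi r \<phi> \<xi> \<eta> = (if \<xi> = \<eta> then 0 else \<phi> (confluent r \<xi> \<eta>))"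

definition is_ultrametric :: "'a set \<Rightarrow> ('a \<Rightarrow> 'a \<Rightarrow> real) \<Rightarrow> bool" where
  "is_ultrametric S d \<longleftrightarrow>
     (\<forall>x\<in>S. \<forall>y\<in>S. d x y = 0 \<longleftrightarrow> x = y)
   \<and> (\<forall>x\<in>S. \<forall>y\<in>S. d x y \<ge> 0)
   \<and> (\<forall>x\<in>S. \<forall>y\<in>S. d x y = d y x)
   \<and> (\<forall>x\<in>S. \<forall>y\<in>S. \<forall>z\<in>S. d x z \<le> max (d x y) (d y z))"

definition closed_ball_in :: "'a set \<Rightarrow> ('a \<Rightarrow> 'a \<Rightarrow> real) \<Rightarrow> 'a \<Rightarrow> real \<Rightarrow> 'a set" where
  "closed_ball_in S d x \<rho> = {y \<in> S. d x y \<le> \<rho>}"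

end

theory Submission
  imports Defs
begin

text \<open>Every end is represented by exactly one ray from the root, and the shadow \<open>\<partial>T\<^sub>x\<close> consists of
the ends whose ray passes through \<open>x\<close>. Put \<open>\<phi>(x) = diam \<partial>T\<^sub>x\<close>. Since \<open>\<partial>T\<^sub>x\<close> is a closed
ball of an ultrametric, it is the ball of radius \<open>\<phi>(x)\<close> about each of its points; it contains
ends through two different children of \<open>x\<close>, so \<open>\<phi>(x) > 0\<close>, and it misses an end of the
strictly larger shadow of \<open>x\<^sup>-\<close>, so \<open>\<phi>(x) < \<phi>(x\<^sup>-)\<close>. For distinct ends \<open>\<xi>, \<eta>\<close> the ball of radius
\<open>d(\<xi>,\<eta>)\<close> about \<open>\<xi>\<close> is some \<open>\<partial>T\<^sub>y\<close> containing both, so \<open>y\<close> lies on both rays and hence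
below \<open>\<xi> \<and> \<eta>\<close>, which gives \<open>\<phi>(\<xi> \<and> \<eta>) \<le> d(\<xi>,\<eta>) \<le> \<phi>(\<xi> \<and> \<eta>)\<close>. Likewise the balls of
radius \<open>\<epsilon>\<close> about \<open>\<xi>\<close> are shadows of vertices on its ray, so \<open>\<phi> \<rightarrow> 0\<close> along rays.\<close>

section \<open>Equivalence of rays\<close>

lemma ray_equiv_refl: "ray_equiv f f"
  unfolding ray_equiv_def by simp

lemma ray_equiv_sym: "ray_equiv f g \<Longrightarrow> ray_equiv g f"
  unfolding ray_equiv_def by (simp add: Un_commute)

lemma ray_equiv_trans: "ray_equiv f g \<Longrightarrow> ray_equiv g h \<Longrightarrow> ray_equiv f h"
  unfolding ray_equiv_def
  by (rule finite_subset[of _ "(range f - range g) \<union> (range g - range f)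
                               \<union> ((range g - range h) \<union> (range h - range g))"]) auto

lemma ray_equiv_if_common_tail:
  assumes "\<And>j. f (a + j) = g (b + j)"
  shows "ray_equiv f g"
proof -
  have head: "range f - range g \<subseteq> f ` {..<a}"
    if tail: "\<And>j. f (a + j) = g (b + j)" for f g :: "nat \<Rightarrow> 'a" and a b
  proof
    fix y assume y: "y \<in> range f - range g"
    then obtain n where n: "y = f n" by blast
    have "\<not> a \<le> n"
    proof
      assume "a \<le> n"
      then have "f n = g (b + (n - a))" using tail[of "n - a"] by simp
      then show False using y n by auto
    qed
    then show "y \<in> f ` {..<a}" using n by auto
  qed
  have "range f - range g \<subseteq> f ` {..<a}" "range g - range f \<subseteq> g ` {..<b}"
    using head[of f a g b] head[of g b f a] assms by metis+
  then show ?thesis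
    unfolding ray_equiv_def by (meson finite_Un finite_imageI finite_lessThan finite_subset)
qed

lemma ray_equiv_ranges_meet:
  assumes "ray_equiv f g" and "inj f"
  shows "range f \<inter> range g \<noteq> {}"
proof
  assume "range f \<inter> range g = {}"
  then have "finite (range f)"
    using assms(1) unfolding ray_equiv_def by (metis Diff_triv finite_Un)
  then show False
    using assms(2) finite_imageD infinite_UNIV_nat by blast
qed

lemma ray_shift: "ray V r p f \<Longrightarrow> ray V r p (\<lambda>j. f (n + j))"
  unfolding ray_def inj_def by (metis add_Suc_right add_left_cancel)

section \<open>Ultrametrics\<close>

definition diam_of :: "('a \<Rightarrow> 'a \<Rightarrow> real) \<Rightarrow> 'a set \<Rightarrow> real" where
  "diam_of d A = Sup {d a b | a b. a \<in> A \<and> b \<in> A}"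

lemma dist_le_diam_of:
  assumes "\<And>a b. a \<in> A \<Longrightarrow> b \<in> A \<Longrightarrow> d a b \<le> c" and "a \<in> A" and "b \<in> A"
  shows "d a b \<le> diam_of d A"
  unfolding diam_of_def
  by (rule cSup_upper) (use assms in \<open>auto simp: bdd_above_def\<close>)

lemma diam_of_le:
  "A \<noteq> {} \<Longrightarrow> (\<And>a b. a \<in> A \<Longrightarrow> b \<in> A \<Longrightarrow> d a b \<le> c) \<Longrightarrow> diam_of d A \<le> c"
  unfolding diam_of_def by (rule cSup_least) blast+

locale ultrametric =
  fixes S :: "'a set" and d :: "'a \<Rightarrow> 'a \<Rightarrow> real"
  assumes is_ultrametric: "is_ultrametric S d"
begin

lemma d_eq_0_iff: "a \<in> S \<Longrightarrow> b \<in> S \<Longrightarrow> d a b = 0 \<longleftrightarrow> a = b"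
  using is_ultrametric unfolding is_ultrametric_def by blast

lemma d_nonneg: "a \<in> S \<Longrightarrow> b \<in> S \<Longrightarrow> d a b \<ge> 0"
  using is_ultrametric unfolding is_ultrametric_def by blast

lemma d_pos: "a \<in> S \<Longrightarrow> b \<in> S \<Longrightarrow> a \<noteq> b \<Longrightarrow> d a b > 0"
  using d_eq_0_iff d_nonneg by (metis less_eq_real_def)

lemma d_sym: "a \<in> S \<Longrightarrow> b \<in> S \<Longrightarrow> d a b = d b a"
  using is_ultrametric unfolding is_ultrametric_def by blast

lemma d_ultra: "a \<in> S \<Longrightarrow> b \<in> S \<Longrightarrow> c \<in> S \<Longrightarrow> d a c \<le> max (d a b) (d b c)"
  using is_ultrametric unfolding is_ultrametric_def by blast

lemma centre_in_closed_ball: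
  assumes "\<xi> \<in> S" and "0 \<le> \<rho>"
  shows "\<xi> \<in> closed_ball_in S d \<xi> \<rho>"
proof -
  have "d \<xi> \<xi> = 0" using d_eq_0_iff[OF assms(1) assms(1)] by simp
  then show ?thesis using assms unfolding closed_ball_in_def by simp
qed

lemma closed_ball_dist_le:
  assumes "\<zeta> \<in> S" "a \<in> closed_ball_in S d \<zeta> \<rho>" "b \<in> closed_ball_in S d \<zeta> \<rho>"
  shows "d a b \<le> \<rho>"
proof -
  have in_S: "a \<in> S" "b \<in> S" and "d \<zeta> a \<le> \<rho>" "d \<zeta> b \<le> \<rho>"
    using assms unfolding closed_ball_in_def by auto
  have "d a b \<le> max (d \<zeta> a) (d \<zeta> b)"
    using d_ultra[OF in_S(1) assms(1) in_S(2)] d_sym[OF in_S(1) assms(1)] by simp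
  also have "\<dots> \<le> \<rho>" using \<open>d \<zeta> a \<le> \<rho>\<close> \<open>d \<zeta> b \<le> \<rho>\<close> by simp
  finally show ?thesis .
qed

lemma closed_ball_recentre:
  assumes \<zeta>: "\<zeta> \<in> S" and \<xi>: "\<xi> \<in> closed_ball_in S d \<zeta> \<rho>"
  defines "B \<equiv> closed_ball_in S d \<zeta> \<rho>"
  shows "B = closed_ball_in S d \<xi> (diam_of d B)"
proof
  have bound: "\<And>a b. a \<in> B \<Longrightarrow> b \<in> B \<Longrightarrow> d a b \<le> \<rho>"
    unfolding B_def by (rule closed_ball_dist_le[OF \<zeta>])
  have "\<xi> \<in> B" using \<xi> unfolding B_def .
  show "B \<subseteq> closed_ball_in S d \<xi> (diam_of d B)"
  proof
    fix \<eta> assume "\<eta> \<in> B"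
    then have "\<eta> \<in> S" unfolding B_def closed_ball_in_def by simp
    moreover have "d \<xi> \<eta> \<le> diam_of d B" using dist_le_diam_of[of B d \<rho>, OF bound \<open>\<xi> \<in> B\<close> \<open>\<eta> \<in> B\<close>] .
    ultimately show "\<eta> \<in> closed_ball_in S d \<xi> (diam_of d B)" unfolding closed_ball_in_def by simp
  qed
  show "closed_ball_in S d \<xi> (diam_of d B) \<subseteq> B"
  proof
    fix \<eta> assume "\<eta> \<in> closed_ball_in S d \<xi> (diam_of d B)"
    then have \<eta>: "\<eta> \<in> S" "d \<xi> \<eta> \<le> diam_of d B" unfolding closed_ball_in_def by auto
    have "diam_of d B \<le> \<rho>" using diam_of_le[of B d \<rho>] bound \<open>\<xi> \<in> B\<close> by blast
    moreover have "\<xi> \<in> S" "d \<zeta> \<xi> \<le> \<rho>" using \<xi> unfolding closed_ball_in_def by auto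
    ultimately have "d \<zeta> \<eta> \<le> \<rho>" using d_ultra[OF \<zeta> _ \<eta>(1), of \<xi>] \<eta> by linarith
    then show "\<eta> \<in> B" using \<eta>(1) unfolding B_def closed_ball_in_def by simp
  qed
qed

end

section \<open>Rays in a rooted tree\<close>

locale rtree =
  fixes V :: "'v set" and r :: 'v and p :: "'v \<Rightarrow> 'v"
  assumes rooted_tree: "rooted_tree V r p"
begin

text \<open>The rays \<open>\<pi>(o,\<xi>)\<close>, indexed by the distance from the root.\<close>

definition branches :: "(nat \<Rightarrow> 'v) set" where
  "branches = {g. g 0 = r \<and> (\<forall>n. g (Suc n) \<in> V \<and> g (Suc n) \<noteq> r \<and> p (g (Suc n)) = g n)}"

definition end_of :: "(nat \<Rightarrow> 'v) \<Rightarrow> (nat \<Rightarrow> 'v) set" where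
  "end_of g = {h. ray V r p h \<and> ray_equiv g h}"

abbreviation shadow :: "'v \<Rightarrow> (nat \<Rightarrow> 'v) set set" where
  "shadow x \<equiv> boundary_sub V r p x"

lemma root_in_V: "r \<in> V"
  using rooted_tree unfolding rooted_tree_def by blast

lemma parent_in_V: "x \<in> V \<Longrightarrow> x \<noteq> r \<Longrightarrow> p x \<in> V"
  using rooted_tree unfolding rooted_tree_def by blast

lemma reaches_root: "x \<in> V \<Longrightarrow> \<exists>n. (p ^^ n) x = r"
  using rooted_tree unfolding rooted_tree_def by blast

lemma branch_0: "g \<in> branches \<Longrightarrow> g 0 = r"
  by (simp add: branches_def)

lemma branch_in_V: "g \<in> branches \<Longrightarrow> g n \<in> V"
  by (cases n) (auto simp: branches_def root_in_V)

lemma branch_Suc_neq_root: "g \<in> branches \<Longrightarrow> g (Suc n) \<noteq> r"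
  by (simp add: branches_def)

lemma parent_branch_Suc: "g \<in> branches \<Longrightarrow> p (g (Suc n)) = g n"
  by (simp add: branches_def)

lemma funpow_parent_branch: "g \<in> branches \<Longrightarrow> k \<le> n \<Longrightarrow> (p ^^ k) (g n) = g (n - k)"
proof (induction k)
  case (Suc k)
  then have "(p ^^ k) (g n) = g (Suc (n - Suc k))" by (simp add: Suc_diff_Suc)
  then show ?case using Suc parent_branch_Suc by simp
qed simp

lemma branch_index_unique:
  assumes g: "g \<in> branches" and h: "h \<in> branches" and eq: "g n = h m"
  shows "n = m"
proof -
  have "n \<le> m" if g: "g \<in> branches" and h: "h \<in> branches" and "g n = h m" for g h n m
  proof (rule ccontr)
    assume "\<not> n \<le> m"
    then have "(p ^^ m) (g n) = g (Suc (n - m - 1))"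
      using funpow_parent_branch[OF g, of m n] by (simp add: Suc_diff_Suc)
    moreover have "(p ^^ m) (h m) = r"
      using funpow_parent_branch[OF h, of m m] branch_0[OF h] by simp
    ultimately show False using \<open>g n = h m\<close> branch_Suc_neq_root[OF g] by metis
  qed
  then show ?thesis using g h eq by (metis le_antisym)
qed

lemma branches_agree_below:
  assumes g: "g \<in> branches" and h: "h \<in> branches" and eq: "g n = h m" and "k \<le> n"
  shows "g k = h k"
proof -
  have "n = m" using branch_index_unique[OF g h eq] .
  then show ?thesis
    using funpow_parent_branch[OF g, of "n - k" n] funpow_parent_branch[OF h, of "n - k" n]
      eq \<open>k \<le> n\<close> by simp
qed

lemma inj_branch: "g \<in> branches \<Longrightarrow> inj g"
  unfolding inj_def using branch_index_unique by blast

lemma ray_branch: "g \<in> branches \<Longrightarrow> ray V r p g"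
  unfolding ray_def adj_def
  using inj_branch branch_in_V branch_Suc_neq_root parent_branch_Suc by blast

lemma branch_index_pred:
  assumes g: "g \<in> branches" and "g m = z" and "z \<noteq> r"
  obtains k where "m = Suc k" and "g k = p z"
proof -
  have "m \<noteq> 0" using assms branch_0[OF g] by (cases m) auto
  then show ?thesis using that parent_branch_Suc[OF g] \<open>g m = z\<close> by (metis not0_implies_Suc)
qed

lemma ray_in_V: "ray V r p f \<Longrightarrow> f n \<in> V"
  unfolding ray_def adj_def by blast

lemma ray_step_cases:
  "ray V r p f \<Longrightarrow> (f n \<noteq> r \<and> p (f n) = f (Suc n)) \<or> (f (Suc n) \<noteq> r \<and> p (f (Suc n)) = f n)"
  unfolding ray_def adj_def by blast

text \<open>Once a ray steps away from the root it never turns back, since that would revisit a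
vertex.\<close>

lemma ray_descends_from:
  assumes f: "ray V r p f" and down: "f (Suc a) \<noteq> r \<and> p (f (Suc a)) = f a" and "a \<le> n"
  shows "f (Suc n) \<noteq> r \<and> p (f (Suc n)) = f n"
  using \<open>a \<le> n\<close>
proof (induction n rule: dec_induct)
  case (step n)
  have "p (f (Suc n)) \<noteq> f (Suc (Suc n))"
  proof
    assume "p (f (Suc n)) = f (Suc (Suc n))"
    then have "f n = f (Suc (Suc n))" using step.IH by simp
    then show False using f unfolding ray_def inj_def by fastforce
  qed
  then show ?case using ray_step_cases[OF f, of "Suc n"] by blast
qed (use down in blast)

lemma ray_eventually_descends:
  assumes f: "ray V r p f"
  shows "\<exists>a. f (Suc a) \<noteq> r \<and> p (f (Suc a)) = f a"
proof (rule ccontr)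
  assume "\<not> ?thesis"
  then have up: "f n \<noteq> r" "f (Suc n) = p (f n)" for n
    using ray_step_cases[OF f, of n] by auto
  have iterate: "f n = (p ^^ n) (f 0)" for n by (induction n) (simp_all add: up(2))
  obtain N where "(p ^^ N) (f 0) = r" using reaches_root ray_in_V[OF f] by blast
  then show False using up(1)[of N] iterate[of N] by simp
qed

lemma branch_if_ray_from_root:
  assumes f: "ray V r p f" and "f 0 = r"
  shows "f \<in> branches"
proof -
  have "f (Suc 0) \<noteq> r \<and> p (f (Suc 0)) = f 0" using ray_step_cases[OF f, of 0] \<open>f 0 = r\<close> by blast
  then have "f (Suc n) \<noteq> r \<and> p (f (Suc n)) = f n" for n using ray_descends_from[OF f] by blast
  then show ?thesis unfolding branches_def using ray_in_V[OF f] \<open>f 0 = r\<close> by blast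
qed

lemma descending_path_extends_to_branch:
  assumes x: "x \<in> V" and "s 0 = x"
    and s: "\<And>j. s (Suc j) \<in> V \<and> s (Suc j) \<noteq> r \<and> p (s (Suc j)) = s j"
  obtains g D where "g \<in> branches" and "\<And>j. g (D + j) = s j"
proof -
  define D where "D = (LEAST n. (p ^^ n) x = r)"
  have D: "(p ^^ D) x = r" unfolding D_def using reaches_root[OF x] by (rule LeastI_ex)
  have below_D: "k < D \<Longrightarrow> (p ^^ k) x \<noteq> r" for k unfolding D_def using not_less_Least by blast
  have in_V: "k \<le> D \<Longrightarrow> (p ^^ k) x \<in> V" for k
    by (induction k) (use x below_D parent_in_V in auto)
  define g where "g n = (if n \<le> D then (p ^^ (D - n)) x else s (n - D))" for n
  have "g (Suc n) \<in> V \<and> g (Suc n) \<noteq> r \<and> p (g (Suc n)) = g n" for n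
  proof (cases "Suc n \<le> D")
    case True
    then have "D - n = Suc (D - Suc n)" by simp
    then show ?thesis using True in_V[of "D - Suc n"] below_D[of "D - Suc n"] by (simp add: g_def)
  next
    case False
    then have "g n = s (n - D)" "Suc n - D = Suc (n - D)" using \<open>s 0 = x\<close> by (auto simp: g_def)
    then show ?thesis using False s[of "n - D"] by (simp add: g_def)
  qed
  then have "g \<in> branches" using D unfolding branches_def g_def by simp
  moreover have "g (D + j) = s j" for j using \<open>s 0 = x\<close> by (simp add: g_def)
  ultimately show ?thesis using that by blast
qed

lemma ray_tail_in_branch:
  assumes f: "ray V r p f"
  obtains g a D where "g \<in> branches" and "\<And>j. f (a + j) = g (D + j)"
proof -
  obtain a where down: "f (Suc a) \<noteq> r \<and> p (f (Suc a)) = f a"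
    using ray_eventually_descends[OF f] by blast
  have "f (a + Suc j) \<in> V \<and> f (a + Suc j) \<noteq> r \<and> p (f (a + Suc j)) = f (a + j)" for j
    using ray_descends_from[OF f down, of "a + j"] ray_in_V[OF f] by simp
  then obtain g D where "g \<in> branches" "\<And>j. g (D + j) = f (a + j)"
    using descending_path_extends_to_branch[of "f a" "\<lambda>j. f (a + j)"] ray_in_V[OF f] by auto
  then show ?thesis using that by metis
qed

lemma branch_eq_if_ray_equiv:
  assumes g: "g \<in> branches" and h: "h \<in> branches" and "ray_equiv g h"
  shows "g = h"
proof (rule ccontr)
  assume "g \<noteq> h"
  then obtain j where j: "g j \<noteq> h j" by blast
  define t where "t n = g (j + n)" for n
  have "ray_equiv g t" by (rule ray_equiv_if_common_tail[of g j t 0]) (simp add: t_def)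
  then have "ray_equiv t h" using \<open>ray_equiv g h\<close> ray_equiv_sym ray_equiv_trans by blast
  moreover have "inj t" using ray_shift[OF ray_branch[OF g]] unfolding ray_def t_def by blast
  ultimately obtain n m where "g (j + n) = h m" using ray_equiv_ranges_meet unfolding t_def by blast
  then show False using branches_agree_below[OF g h] j by simp
qed

lemma ends_eq_end_of_branches: "ends V r p = end_of ` branches"
proof
  show "ends V r p \<subseteq> end_of ` branches"
  proof
    fix \<xi> assume "\<xi> \<in> ends V r p"
    then obtain f where f: "ray V r p f" and \<xi>: "\<xi> = {h. ray V r p h \<and> ray_equiv f h}"
      unfolding ends_def by blast
    obtain g a D where "g \<in> branches" "\<And>j. f (a + j) = g (D + j)"
      using ray_tail_in_branch[OF f] by blast
    moreover from this have "\<xi> = end_of g"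
      unfolding \<xi> end_of_def
      using ray_equiv_if_common_tail ray_equiv_sym ray_equiv_trans by metis
    ultimately show "\<xi> \<in> end_of ` branches" by blast
  qed
  show "end_of ` branches \<subseteq> ends V r p"
    unfolding ends_def end_of_def using ray_branch by blast
qed

lemma branch_in_end_of: "g \<in> branches \<Longrightarrow> g \<in> end_of g"
  unfolding end_of_def using ray_branch ray_equiv_refl by blast

lemma inj_on_end_of: "inj_on end_of branches"
  unfolding inj_on_def using branch_in_end_of branch_eq_if_ray_equiv unfolding end_of_def by blast

lemma ray_from_root_end_of:
  assumes g: "g \<in> branches"
  shows "ray_from_root r (end_of g) = g"
  unfolding ray_from_root_def
proof (rule the_equality)
  show "g \<in> end_of g \<and> g 0 = r" using branch_in_end_of[OF g] branch_0[OF g] by blast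
  fix f assume "f \<in> end_of g \<and> f 0 = r"
  then have "f \<in> branches" "ray_equiv g f" using branch_if_ray_from_root unfolding end_of_def by blast+
  then show "f = g" using branch_eq_if_ray_equiv[OF g] by metis
qed

lemma branch_in_subtree:
  assumes g: "g \<in> branches" and "n \<le> m"
  shows "g m \<in> subtree V r p (g n)"
proof -
  have "(p ^^ (m - n)) (g m) = g n" using funpow_parent_branch[OF g] \<open>n \<le> m\<close> by simp
  moreover have "(p ^^ k) (g m) \<noteq> r" if "k < m - n" for k
    using funpow_parent_branch[OF g, of k m] branch_Suc_neq_root[OF g, of "m - k - 1"] that
    by (simp add: Suc_diff_Suc)
  ultimately show ?thesis unfolding subtree_def using branch_in_V[OF g] by blast
qed

lemma in_range_if_branch_in_subtree:
  assumes g: "g \<in> branches" and "g m \<in> subtree V r p x"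
  shows "x \<in> range g"
proof -
  obtain j where j: "(p ^^ j) (g m) = x" "\<forall>k<j. (p ^^ k) (g m) \<noteq> r"
    using assms unfolding subtree_def by blast
  have "j \<le> m"
  proof (rule ccontr)
    assume "\<not> j \<le> m"
    then have "(p ^^ m) (g m) \<noteq> r" using j(2) by simp
    then show False using funpow_parent_branch[OF g, of m m] branch_0[OF g] by simp
  qed
  then show ?thesis using j(1) funpow_parent_branch[OF g] by (metis rangeI)
qed

lemma end_of_in_shadow_iff:
  assumes g: "g \<in> branches"
  shows "end_of g \<in> shadow x \<longleftrightarrow> x \<in> range g"
proof
  assume "end_of g \<in> shadow x"
  then obtain h where "h \<in> end_of g" and h: "range h \<subseteq> subtree V r p x"
    unfolding boundary_sub_def by blast
  then have "range g \<inter> range h \<noteq> {}"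
    using ray_equiv_ranges_meet inj_branch[OF g] unfolding end_of_def by blast
  then obtain m where "g m \<in> subtree V r p x" using h by blast
  then show "x \<in> range g" using in_range_if_branch_in_subtree[OF g] by blast
next
  assume "x \<in> range g"
  then obtain n where n: "x = g n" by blast
  define t where "t j = g (n + j)" for j
  have "ray_equiv g t" by (rule ray_equiv_if_common_tail[of g n t 0]) (simp add: t_def)
  moreover have "ray V r p t"
    using ray_shift[OF ray_branch[OF g]] unfolding t_def .
  moreover have "range t \<subseteq> subtree V r p x"
    unfolding t_def n using branch_in_subtree[OF g] by auto
  moreover have "end_of g \<in> ends V r p" using ends_eq_end_of_branches g by blast
  ultimately show "end_of g \<in> shadow x" unfolding boundary_sub_def end_of_def by blast
qed

lemma shadow_subset_ends: "shadow x \<subseteq> ends V r p"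
  unfolding boundary_sub_def by blast

lemma shadow_branch_antimono:
  assumes g: "g \<in> branches" and "k \<le> m"
  shows "shadow (g m) \<subseteq> shadow (g k)"
proof
  fix \<zeta> assume \<zeta>: "\<zeta> \<in> shadow (g m)"
  then obtain h where h: "h \<in> branches" and "\<zeta> = end_of h"
    using ends_eq_end_of_branches shadow_subset_ends by blast
  then obtain j where "h j = g m" using end_of_in_shadow_iff[OF h] \<zeta> by (metis rangeE)
  moreover from this have "j = m" using branch_index_unique[OF h g] by blast
  ultimately have "h k = g k" using branches_agree_below[OF h g] \<open>k \<le> m\<close> by blast
  then show "\<zeta> \<in> shadow (g k)" using end_of_in_shadow_iff[OF h] \<open>\<zeta> = end_of h\<close> by (metis rangeI)
qed

lemma siblings_on_branch_eq:
  assumes g: "g \<in> branches" and "z \<in> range g" "z' \<in> range g" "z \<noteq> r" "z' \<noteq> r" "p z = p z'"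
  shows "z = z'"
proof -
  obtain m m' where m: "g m = z" and m': "g m' = z'" using assms by blast
  obtain k where k: "m = Suc k" "g k = p z" using branch_index_pred[OF g m \<open>z \<noteq> r\<close>] .
  obtain k' where k': "m' = Suc k'" "g k' = p z'" using branch_index_pred[OF g m' \<open>z' \<noteq> r\<close>] .
  have "k = k'" using inj_branch[OF g] k(2) k'(2) \<open>p z = p z'\<close> unfolding inj_def by metis
  then show ?thesis using k(1) k'(1) m m' by simp
qed

lemma confluent_end_of:
  assumes g: "g \<in> branches" and h: "h \<in> branches" and "g \<noteq> h"
  obtains m where "confluent r (end_of g) (end_of h) = g m" and "g m = h m"
    and "\<And>k. g k = h k \<Longrightarrow> k \<le> m"
proof -
  obtain j where j: "g j \<noteq> h j" using \<open>g \<noteq> h\<close> by blast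
  define P where "P n \<longleftrightarrow> g n \<in> range h" for n
  have bounded: "P n \<Longrightarrow> n \<le> j" for n
    using branches_agree_below[OF g h] j unfolding P_def by (metis nat_le_linear rangeE)
  have "P 0" unfolding P_def using branch_0[OF g] branch_0[OF h] by (metis rangeI)
  define m where "m = Greatest P"
  have "P m" unfolding m_def using GreatestI_nat[of P 0 j] \<open>P 0\<close> bounded by blast
  have greatest: "P k \<Longrightarrow> k \<le> m" for k unfolding m_def using Greatest_le_nat bounded by blast
  have "g m = h m" using \<open>P m\<close> branch_index_unique[OF g h] unfolding P_def by (metis rangeE)
  moreover have "confluent r (end_of g) (end_of h) = g m"
    unfolding confluent_def ray_from_root_end_of[OF g] ray_from_root_end_of[OF h] Let_def m_def P_def
    by simp
  moreover have "g k = h k \<Longrightarrow> k \<le> m" for k using greatest unfolding P_def by (metis rangeI)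
  ultimately show ?thesis using that by blast
qed

lemma parent_in_range_branch:
  assumes g: "g \<in> branches" and "z \<in> range g" and "z \<noteq> r"
  shows "p z \<in> range g"
proof -
  obtain m where "g m = z" using assms by blast
  then show ?thesis using branch_index_pred[OF g _ \<open>z \<noteq> r\<close>] by (metis rangeI)
qed

lemma in_shadowE:
  assumes "\<xi> \<in> shadow x"
  obtains g where "g \<in> branches" and "\<xi> = end_of g" and "x \<in> range g"
proof -
  obtain g where g: "g \<in> branches" and "\<xi> = end_of g"
    using assms ends_eq_end_of_branches shadow_subset_ends by blast
  then show ?thesis using that end_of_in_shadow_iff assms by blast
qed

lemma shadow_subset_shadow_parent: "x \<noteq> r \<Longrightarrow> shadow x \<subseteq> shadow (p x)"
  by (metis end_of_in_shadow_iff in_shadowE parent_in_range_branch subsetI)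

lemma shadows_of_siblings_disjoint:
  assumes "z \<noteq> r" "z' \<noteq> r" "p z = p z'" "z \<noteq> z'"
  shows "shadow z \<inter> shadow z' = {}"
proof (rule ccontr)
  assume "shadow z \<inter> shadow z' \<noteq> {}"
  then obtain g g' where "g \<in> branches" "z \<in> range g" "g' \<in> branches" "z' \<in> range g'"
    "end_of g = end_of g'"
    by (metis disjoint_iff in_shadowE)
  then show False using inj_on_end_of siblings_on_branch_eq assms unfolding inj_on_def by metis
qed

end

locale branching_tree = rtree +
  assumes fdeg_ge_2: "\<forall>x\<in>V. fdeg V r p x \<ge> 2"
begin

lemma exists_other_child:
  assumes "x \<in> V"
  obtains z where "z \<in> V" "z \<noteq> r" "p z = x" and "z \<noteq> y"
proof -
  have "2 \<le> card (children V r p x)" using fdeg_ge_2 assms unfolding fdeg_def by blast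
  moreover have "card (children V r p x) \<le> 1" if "children V r p x \<subseteq> {y}"
    using card_mono[OF _ that] by simp
  ultimately obtain z where "z \<in> children V r p x" "z \<noteq> y" by fastforce
  then show ?thesis using that unfolding children_def by blast
qed

lemma branch_through_vertex:
  assumes y: "y \<in> V"
  obtains g where "g \<in> branches" and "y \<in> range g"
proof -
  define c where "c z = (SOME w. w \<in> V \<and> w \<noteq> r \<and> p w = z)" for z
  have c: "c z \<in> V \<and> c z \<noteq> r \<and> p (c z) = z" if "z \<in> V" for z
    unfolding c_def by (rule someI_ex) (use exists_other_child[OF that] in blast)
  define s where "s j = (c ^^ j) y" for j
  have s_in_V: "s j \<in> V" for j
    by (induction j) (use y c in \<open>auto simp: s_def\<close>)
  have down: "s (Suc j) \<in> V \<and> s (Suc j) \<noteq> r \<and> p (s (Suc j)) = s j" for j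
    using c[OF s_in_V[of j]] unfolding s_def by simp
  have "s 0 = y" unfolding s_def by simp
  obtain g D where "g \<in> branches" "\<And>j. g (D + j) = s j"
    using descending_path_extends_to_branch[OF y \<open>s 0 = y\<close> down] by blast
  moreover from this have "g D = y" using \<open>s 0 = y\<close> by (metis add_0_right)
  ultimately show ?thesis using that by blast
qed

lemma shadow_nonempty:
  assumes "x \<in> V"
  shows "shadow x \<noteq> {}"
proof -
  obtain g where "g \<in> branches" "x \<in> range g" using branch_through_vertex[OF assms] .
  then show ?thesis using end_of_in_shadow_iff by blast
qed

lemma shadow_has_two_ends:
  assumes "x \<in> V"
  obtains \<xi> \<eta> where "\<xi> \<in> shadow x" "\<eta> \<in> shadow x" "\<xi> \<noteq> \<eta>"
proof -
  obtain z where z: "z \<in> V" "z \<noteq> r" "p z = x" using exists_other_child[OF assms, of r] by blast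
  obtain z' where z': "z' \<in> V" "z' \<noteq> r" "p z' = x" "z' \<noteq> z"
    using exists_other_child[OF assms, of z] by blast
  obtain \<xi> \<eta> where "\<xi> \<in> shadow z" "\<eta> \<in> shadow z'"
    using shadow_nonempty[OF z(1)] shadow_nonempty[OF z'(1)] by blast
  moreover have "shadow z \<inter> shadow z' = {}"
    using shadows_of_siblings_disjoint[of z z'] z z' by simp
  moreover have "shadow z \<subseteq> shadow x" "shadow z' \<subseteq> shadow x"
    using shadow_subset_shadow_parent[OF z(2)] shadow_subset_shadow_parent[OF z'(2)] z(3) z'(3)
    by simp_all
  ultimately show ?thesis using that by blast
qed

lemma shadow_psubset_shadow_parent:
  assumes "x \<in> V" "x \<noteq> r"
  shows "shadow x \<subset> shadow (p x)"
proof -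
  obtain z where z: "z \<in> V" "z \<noteq> r" "p z = p x" "z \<noteq> x"
    using exists_other_child parent_in_V[OF assms] by metis
  then obtain \<zeta> where "\<zeta> \<in> shadow z" using shadow_nonempty by blast
  then have "\<zeta> \<in> shadow (p x)" "\<zeta> \<notin> shadow x"
    using shadow_subset_shadow_parent[OF z(2)] shadows_of_siblings_disjoint[of z x] z assms
    by auto
  then show ?thesis using shadow_subset_shadow_parent[OF assms(2)] by blast
qed

end

section \<open>Ultrametrics whose balls are the shadows\<close>

locale tree_ultrametric = branching_tree V r p + ultrametric "ends V r p" d
  for V :: "'v set" and r :: 'v and p :: "'v \<Rightarrow> 'v"
    and d :: "(nat \<Rightarrow> 'v) set \<Rightarrow> (nat \<Rightarrow> 'v) set \<Rightarrow> real" +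
  assumes balls_eq_shadows:
    "{closed_ball_in (ends V r p) d \<xi> \<rho> | \<xi> \<rho>. \<xi> \<in> ends V r p \<and> \<rho> > 0} = {shadow x | x. x \<in> V}"
begin

definition shadow_diam :: "'v \<Rightarrow> real" where
  "shadow_diam x = diam_of d (shadow x)"

lemma closed_ball_is_shadow:
  "\<xi> \<in> ends V r p \<Longrightarrow> \<rho> > 0 \<Longrightarrow> \<exists>y\<in>V. closed_ball_in (ends V r p) d \<xi> \<rho> = shadow y"
  using balls_eq_shadows by blast

lemma shadow_is_closed_ball:
  "x \<in> V \<Longrightarrow> \<exists>\<zeta> \<rho>. \<zeta> \<in> ends V r p \<and> shadow x = closed_ball_in (ends V r p) d \<zeta> \<rho>"
  using balls_eq_shadows by (smt (verit) mem_Collect_eq)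

lemma shadow_eq_closed_ball_shadow_diam:
  assumes "x \<in> V" and "\<xi> \<in> shadow x"
  shows "shadow x = closed_ball_in (ends V r p) d \<xi> (shadow_diam x)"
  using shadow_is_closed_ball[OF assms(1)] closed_ball_recentre assms(2)
  unfolding shadow_diam_def by metis

lemma dist_le_shadow_diam:
  assumes "x \<in> V" and "\<xi> \<in> shadow x" and "\<eta> \<in> shadow x"
  shows "d \<xi> \<eta> \<le> shadow_diam x"
  using shadow_eq_closed_ball_shadow_diam[OF assms(1,2)] assms(3)
  unfolding closed_ball_in_def by blast

lemma shadow_diam_le_radius:
  assumes "x \<in> V" and "\<xi> \<in> ends V r p" and "shadow x \<subseteq> closed_ball_in (ends V r p) d \<xi> \<rho>"
  shows "shadow_diam x \<le> \<rho>"
  unfolding shadow_diam_def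
  by (rule diam_of_le[OF shadow_nonempty[OF assms(1)]])
    (use closed_ball_dist_le[OF assms(2)] assms(3) in blast)

lemma shadow_diam_pos:
  assumes "x \<in> V"
  shows "shadow_diam x > 0"
proof -
  obtain \<xi> \<eta> where "\<xi> \<in> shadow x" "\<eta> \<in> shadow x" "\<xi> \<noteq> \<eta>"
    using shadow_has_two_ends[OF assms] .
  then show ?thesis
    using d_pos dist_le_shadow_diam[OF assms] shadow_subset_ends by (meson less_le_trans subsetD)
qed

lemma shadow_diam_less_parent:
  assumes x: "x \<in> V" "x \<noteq> r"
  shows "shadow_diam x < shadow_diam (p x)"
proof (rule ccontr)
  assume not_less: "\<not> shadow_diam x < shadow_diam (p x)"
  obtain \<zeta> where \<zeta>: "\<zeta> \<in> shadow (p x)" "\<zeta> \<notin> shadow x"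
    using shadow_psubset_shadow_parent[OF x] by blast
  obtain \<xi> where \<xi>: "\<xi> \<in> shadow x" using shadow_nonempty[OF x(1)] by blast
  then have "\<xi> \<in> shadow (p x)" using shadow_psubset_shadow_parent[OF x] by blast
  then have "d \<xi> \<zeta> \<le> shadow_diam (p x)"
    using dist_le_shadow_diam[OF parent_in_V[OF x] _ \<zeta>(1)] by blast
  then have "d \<xi> \<zeta> \<le> shadow_diam x" using not_less by linarith
  then have "\<zeta> \<in> shadow x"
    using shadow_eq_closed_ball_shadow_diam[OF x(1) \<xi>] \<zeta>(1) shadow_subset_ends
    unfolding closed_ball_in_def by blast
  then show False using \<zeta>(2) by blast
qed

lemma dist_eq_shadow_diam_confluent:
  assumes \<xi>: "\<xi> \<in> ends V r p" and \<eta>: "\<eta> \<in> ends V r p" and "\<xi> \<noteq> \<eta>"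
  shows "d \<xi> \<eta> = shadow_diam (confluent r \<xi> \<eta>)"
proof -
  obtain g where g: "g \<in> branches" "\<xi> = end_of g" using \<xi> unfolding ends_eq_end_of_branches ..
  obtain h where h: "h \<in> branches" "\<eta> = end_of h" using \<eta> unfolding ends_eq_end_of_branches ..
  have "g \<noteq> h" using g(2) h(2) \<open>\<xi> \<noteq> \<eta>\<close> by blast
  then obtain m where m: "confluent r \<xi> \<eta> = g m" "g m = h m" "\<And>k. g k = h k \<Longrightarrow> k \<le> m"
    using confluent_end_of[OF g(1) h(1)] unfolding g(2) h(2) by blast
  have gm_in_V: "g m \<in> V" using branch_in_V[OF g(1)] .
  have in_shadow: "\<xi> \<in> shadow (g m)" "\<eta> \<in> shadow (g m)"
    using end_of_in_shadow_iff[OF g(1)] end_of_in_shadow_iff[OF h(1)] g(2) h(2) m(2)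
    by (metis rangeI)+
  define \<rho> where "\<rho> = d \<xi> \<eta>"
  have "\<rho> > 0" unfolding \<rho>_def using d_pos \<xi> \<eta> \<open>\<xi> \<noteq> \<eta>\<close> by blast
  then obtain y where y: "closed_ball_in (ends V r p) d \<xi> \<rho> = shadow y"
    using closed_ball_is_shadow[OF \<xi>] by blast
  have "\<xi> \<in> closed_ball_in (ends V r p) d \<xi> \<rho>" using centre_in_closed_ball[OF \<xi>] \<open>\<rho> > 0\<close> by simp
  moreover have "\<eta> \<in> closed_ball_in (ends V r p) d \<xi> \<rho>"
    using \<eta> unfolding closed_ball_in_def \<rho>_def by simp
  ultimately have "\<xi> \<in> shadow y" "\<eta> \<in> shadow y" unfolding y by blast+
  then have "y \<in> range g" "y \<in> range h"
    using end_of_in_shadow_iff[OF g(1)] end_of_in_shadow_iff[OF h(1)] g(2) h(2) by auto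
  then obtain k k' where "y = g k" "g k = h k'" by auto
  then have "k \<le> m" using branch_index_unique[OF g(1) h(1)] m(3) by blast
  then have "shadow (g m) \<subseteq> closed_ball_in (ends V r p) d \<xi> \<rho>"
    using shadow_branch_antimono[OF g(1)] y \<open>y = g k\<close> by blast
  then have "shadow_diam (g m) \<le> d \<xi> \<eta>"
    using shadow_diam_le_radius[OF gm_in_V \<xi>] unfolding \<rho>_def by blast
  then show ?thesis using dist_le_shadow_diam[OF gm_in_V in_shadow] m(1) by simp
qed

lemma shadow_diam_branch_tendsto_0:
  assumes g: "g \<in> branches"
  shows "(\<lambda>n. shadow_diam (g n)) \<longlonglongrightarrow> 0"
proof (rule LIMSEQ_I)
  fix \<epsilon> :: real assume "\<epsilon> > 0"
  have \<xi>: "end_of g \<in> ends V r p" using ends_eq_end_of_branches g by blast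
  obtain y where y: "closed_ball_in (ends V r p) d (end_of g) (\<epsilon>/2) = shadow y"
    using closed_ball_is_shadow[OF \<xi>] \<open>\<epsilon> > 0\<close> by (metis half_gt_zero)
  have "end_of g \<in> shadow y"
    using centre_in_closed_ball[OF \<xi>, of "\<epsilon>/2"] \<open>\<epsilon> > 0\<close> unfolding y by simp
  then obtain m where "g m = y" using end_of_in_shadow_iff[OF g] by (metis rangeE)
  have "norm (shadow_diam (g n) - 0) < \<epsilon>" if "n \<ge> m" for n
  proof -
    have "shadow (g n) \<subseteq> closed_ball_in (ends V r p) d (end_of g) (\<epsilon>/2)"
      using shadow_branch_antimono[OF g that] \<open>g m = y\<close> y by simp
    then have "shadow_diam (g n) \<le> \<epsilon>/2"
      using shadow_diam_le_radius[OF branch_in_V[OF g] \<xi>] by blast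
    moreover have "shadow_diam (g n) > 0" using shadow_diam_pos[OF branch_in_V[OF g]] .
    ultimately show ?thesis using \<open>\<epsilon> > 0\<close> by simp
  qed
  then show "\<exists>n0. \<forall>n\<ge>n0. norm (shadow_diam (g n) - 0) < \<epsilon>" by blast
qed

lemma shadow_diam_ray_tendsto_0:
  assumes f: "ray V r p f"
  shows "(\<lambda>n. shadow_diam (f n)) \<longlonglongrightarrow> 0"
proof -
  obtain g a D where g: "g \<in> branches" and tail: "\<And>j. f (a + j) = g (D + j)"
    using ray_tail_in_branch[OF f] by blast
  have "(\<lambda>n. shadow_diam (g (n + D))) \<longlonglongrightarrow> 0"
    using LIMSEQ_ignore_initial_segment[OF shadow_diam_branch_tendsto_0[OF g]] .
  then have "(\<lambda>n. shadow_diam (f (n + a))) \<longlonglongrightarrow> 0" using tail by (simp add: add.commute)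
  then show ?thesis by (rule LIMSEQ_offset)
qed

end

theorem lemma2p2:
  fixes V :: "'v set" and r :: 'v and p :: "'v \<Rightarrow> 'v"
    and d :: "(nat \<Rightarrow> 'v) set \<Rightarrow> (nat \<Rightarrow> 'v) set \<Rightarrow> real"
  assumes tree: "rooted_tree V r p"
    and lf: "locally_finite V r p"
    and inf: "infinite V"
    and deg: "\<forall>x\<in>V. fdeg V r p x \<ge> 2"
    and um: "is_ultrametric (ends V r p) d"
    and balls: "{closed_ball_in (ends V r p) d \<xi> \<rho> | \<xi> \<rho>. \<xi> \<in> ends V r p \<and> \<rho> > 0}
                = {boundary_sub V r p x | x. x \<in> V}"
  shows "\<exists>\<phi>. ultrametric_element V r p \<phi> \<and>
           (\<forall>\<xi>\<in>ends V r p. \<forall>\<eta>\<in>ends V r p. d \<xi> \<eta> = d_phi r \<phi> \<xi> \<eta>)"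
proof -
  interpret tree_ultrametric V r p d
    using tree deg um balls by unfold_locales
  have "ultrametric_element V r p shadow_diam"
    unfolding ultrametric_element_def
    using shadow_diam_pos shadow_diam_less_parent shadow_diam_ray_tendsto_0 by blast
  moreover have "\<forall>\<xi>\<in>ends V r p. \<forall>\<eta>\<in>ends V r p. d \<xi> \<eta> = d_phi r shadow_diam \<xi> \<eta>"
    unfolding d_phi_def using dist_eq_shadow_diam_confluent d_eq_0_iff by simp
  ultimately show ?thesis by blast
qed

end
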